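(* Let $\mathcal{N}^g=\{n: T(n)\in\mathcal{G}\}$ be the target set. Then LevinTS run with policy $\pi$ satisfies $$N(\mathrm{LevinTS},\mathcal{N}^g)\le \min_{n\in\mathcal{N}^g}\frac{\ell(n)}{\pi(n)},$$ where $N(\mathrm{LevinTS},\mathcal{N}^g)$ is the number of node selections made by LevinTS up to and including the first selected node belonging to $\mathcal{N}^g$.
   Context: Setting: a finite action set $\mathcal{A}$, a set of states $\mathcal{S}$ with initial state $s_0$, a deterministic transition function $T:\mathcal{S}\times\mathcal{A}\to\mathcal{S}$, and a set of goal states $\mathcal{G}\subseteq\mathcal{S}$. Nodes are finite sequences of actions; the root $n_0$ is the empty sequence; $T(n)$ is the state reached from $s_0$ by applying the actions of $n$ in order; the children of $n$ are $na$, $a\in\mathcal{A}$. For a node $n$ consisting of $t$ actions, $\ell(n):=t+1$. A policy is a function $\pi$ from nodes to $[0,1]$ with $\pi(n_0)=1$ and $\pi(n)=\sum_{a\in\mathcal{A}}\pi(na)$; $\pi(a\mid n)=\pi(na)/\pi(n)$; $\ell(n)/\pi(n)=+\infty$ if $\pi(n)=0$. The policy is Markovian if $\pi(a\mid n_1)=\pi(a\mid n_2)$ whenever $T(n_1)=T(n_2)$. LevinTS: maintain a frontier $\mathcal{F}$, initially $\{n_0\}$, and a record set $\mathcal{V}$, initially $\emptyset$. While $\mathcal{F}\neq\emptyset$: remove from $\mathcal{F}$ a node $n$ minimizing $\ell(n)/\pi(n)$ (this counts as one node selection/expansion); if $T(n)\in\mathcal{G}$, stop with success; if $\pi$ is Markovian,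 then if there is $n'\in\mathcal{V}$ with $T(n')=T(n)$ and $\pi(n')\ge\pi(n)$, skip to the next iteration (state cut), and otherwise add $n$ to $\mathcal{V}$; finally add all children of $n$ to $\mathcal{F}$. *)

theory Defs
  imports Complex_Main "HOL-Library.Extended_Real"
begin

text \<open>Nodes are action lists (actions applied in order from the root).
  The state reached by a node: apply the actions of n in order from s0.\<close>
definition node_state :: "('s \<Rightarrow> 'a \<Rightarrow> 's) \<Rightarrow> 's \<Rightarrow> 'a list \<Rightarrow> 's" where
  "node_state T s0 n = fold (\<lambda>a s. T s a) n s0"

definition node_len :: "'a list \<Rightarrow> nat" where
  "node_len n = length n + 1"

definition is_policy :: "('a::finite list \<Rightarrow> real) \<Rightarrow> bool" where
  "is_policy \<pi> \<longleftrightarrow> \<pi> [] = 1 \<and> (\<forall>n. 0 \<le> \<pi> n \<and> \<pi> n \<le> 1)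
     \<and> (\<forall>n. \<pi> n = (\<Sum>a\<in>UNIV. \<pi> (n @ [a])))"

definition cond_pol :: "('a list \<Rightarrow> real) \<Rightarrow> 'a \<Rightarrow> 'a list \<Rightarrow> real" where
  "cond_pol \<pi> a n = \<pi> (n @ [a]) / \<pi> n"

definition markovian :: "('s \<Rightarrow> 'a \<Rightarrow> 's) \<Rightarrow> 's \<Rightarrow> ('a list \<Rightarrow> real) \<Rightarrow> bool" where
  "markovian T s0 \<pi> \<longleftrightarrow> (\<forall>n1 n2 a. node_state T s0 n1 = node_state T s0 n2 \<longrightarrow>
       cond_pol \<pi> a n1 = cond_pol \<pi> a n2)"

definition levin_cost :: "('a list \<Rightarrow> real) \<Rightarrow> 'a list \<Rightarrow> ereal" where
  "levin_cost \<pi> n = (if \<pi> n = 0 then \<infinity> else ereal (real (node_len n) / \<pi> n))"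

text \<open>A configuration: (frontier F, record set V, stopped-with-success flag).
  sel k F is the node selected at iteration k (tie-breaking rule).\<close>
definition levin_step ::
  "('s \<Rightarrow> 'a::finite \<Rightarrow> 's) \<Rightarrow> 's \<Rightarrow> 's set \<Rightarrow> ('a list \<Rightarrow> real)
   \<Rightarrow> (nat \<Rightarrow> 'a list set \<Rightarrow> 'a list) \<Rightarrow> nat
   \<Rightarrow> 'a list set \<times> 'a list set \<times> bool \<Rightarrow> 'a list set \<times> 'a list set \<times> bool" where
  "levin_step T s0 G \<pi> sel k c =
     (case c of (F, V, stop) \<Rightarrow>
       if stop \<or> F = {} then (F, V, stop)
       else (let n = sel k F; F' = F - {n} in
         if node_state T s0 n \<in> G then (F', V, True)
         else if markovian T s0 \<pi> \<and>
                 (\<exists>n'\<in>V. node_state T s0 n' = node_state T s0 n \<and> \<pi> n' \<ge> \<pi> n)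
         then (F', V, False)
         else (F' \<union> {n @ [a] | a. True},
               (if markovian T s0 \<pi> then V \<union> {n} else V), False)))"

fun levin_run ::
  "('s \<Rightarrow> 'a::finite \<Rightarrow> 's) \<Rightarrow> 's \<Rightarrow> 's set \<Rightarrow> ('a list \<Rightarrow> real)
   \<Rightarrow> (nat \<Rightarrow> 'a list set \<Rightarrow> 'a list) \<Rightarrow> nat \<Rightarrow> 'a list set \<times> 'a list set \<times> bool" where
  "levin_run T s0 G \<pi> sel 0 = ({[]}, {}, False)"
| "levin_run T s0 G \<pi> sel (Suc k) = levin_step T s0 G \<pi> sel k (levin_run T s0 G \<pi> sel k)"

text \<open>Number of node selections up to and including the first selected goal node
  (infinity if no goal node is ever selected). Success is recorded after
  selection number k+1 exactly when the stop flag first becomes true at run index k+1.\<close>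
definition levin_N ::
  "('s \<Rightarrow> 'a::finite \<Rightarrow> 's) \<Rightarrow> 's \<Rightarrow> 's set \<Rightarrow> ('a list \<Rightarrow> real)
   \<Rightarrow> (nat \<Rightarrow> 'a list set \<Rightarrow> 'a list) \<Rightarrow> ereal" where
  "levin_N T s0 G \<pi> sel =
     (if \<exists>k. snd (snd (levin_run T s0 G \<pi> sel k))
      then ereal (real (LEAST k. snd (snd (levin_run T s0 G \<pi> sel k))))
      else \<infinity>)"

definition valid_choice :: "('a list \<Rightarrow> real) \<Rightarrow> (nat \<Rightarrow> 'a list set \<Rightarrow> 'a list) \<Rightarrow> bool" where
  "valid_choice \<pi> sel \<longleftrightarrow> (\<forall>k F. finite F \<and> F \<noteq> {} \<longrightarrow>
      sel k F \<in> F \<and> (\<forall>m\<in>F. levin_cost \<pi> (sel k F) \<le> levin_cost \<pi> m))"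

end

theory Submission
  imports Defs "HOL-Library.Sublist"
begin

text \<open>Let \<open>g\<close> be a goal node with \<open>\<pi> g > 0\<close> and \<open>c = \<ell>(g) / \<pi>(g)\<close>. As long as the
  search has not stopped, some frontier node has cost at most \<open>c\<close>: either an ancestor of \<open>g\<close>
  is on the frontier, or the path to \<open>g\<close> was cut at a node dominated by an expanded node with
  the same state, and for a Markovian policy the dominance carries over to every extension.
  Nodes are selected in order of cost, so all \<open>k + 1\<close> nodes selected up to step \<open>k\<close> satisfy
  \<open>\<ell>(n) \<le> c \<pi>(n)\<close>. A finite set of such nodes has at most \<open>c\<close> elements: its prefix-maximal
  elements form a prefix-free set, whose probabilities sum to at most 1, and each of them has
  \<open>\<ell>(n)\<close> prefixes. Hence the search stops after at most \<open>c\<close> selections.\<close>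

lemma levin_cost_pos: "0 < \<pi> n \<Longrightarrow> levin_cost \<pi> n = ereal (real (node_len n) / \<pi> n)"
  by (simp add: levin_cost_def)

lemma node_state_append_cong:
  "node_state T s0 y = node_state T s0 x \<Longrightarrow> node_state T s0 (y @ s) = node_state T s0 (x @ s)"
  by (simp add: node_state_def)

locale policy =
  fixes \<pi> :: "'a::finite list \<Rightarrow> real"
  assumes is_policy: "is_policy \<pi>"
begin

lemma policy_nonneg: "0 \<le> \<pi> n"
  using is_policy unfolding is_policy_def by blast

lemma policy_root: "\<pi> [] = 1"
  using is_policy unfolding is_policy_def by blast

lemma policy_sum_children: "(\<Sum>a\<in>UNIV. \<pi> (n @ [a])) = \<pi> n"
  using is_policy unfolding is_policy_def by metis

lemma policy_child_le: "\<pi> (n @ [a]) \<le> \<pi> n"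
proof -
  have "\<pi> (n @ [a]) \<le> (\<Sum>b\<in>UNIV. \<pi> (n @ [b]))"
    by (rule member_le_sum) (auto simp: policy_nonneg)
  then show ?thesis
    by (simp add: policy_sum_children)
qed

lemma policy_append_le: "\<pi> (n @ t) \<le> \<pi> n"
proof (induction t rule: rev_induct)
  case (snoc a t)
  then show ?case
    using policy_child_le[of "n @ t" a] by simp
qed simp

lemma policy_sum_extensions: "(\<Sum>t | length t = k. \<pi> (n @ t)) = \<pi> n"
proof (induction k arbitrary: n)
  case (Suc k)
  have lists_Suc: "{t::'a list. length t = Suc k} = (\<lambda>(t, a). a # t) ` ({t. length t = k} \<times> UNIV)"
    using lists_length_Suc_eq[of UNIV k] by simp
  have inj: "inj_on (\<lambda>(t, a::'a). a # t) ({t. length t = k} \<times> UNIV)"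
    by (auto simp: inj_on_def)
  have "(\<Sum>t | length t = Suc k. \<pi> (n @ t))
      = (\<Sum>(t, a)\<in>{t. length t = k} \<times> UNIV. \<pi> (n @ a # t))"
    unfolding lists_Suc sum.reindex[OF inj] by (simp add: comp_def case_prod_beta)
  also have "\<dots> = (\<Sum>a\<in>UNIV. \<Sum>t | length t = k. \<pi> ((n @ [a]) @ t))"
    by (simp add: sum.cartesian_product[symmetric] sum.swap[of _ "{t. length t = k}"])
  also have "\<dots> = \<pi> n"
    by (simp only: Suc.IH policy_sum_children)
  finally show ?case .
qed simp

lemma policy_sum_extensions_of_length:
  assumes "length y \<le> D"
  shows "(\<Sum>z | length z = D \<and> prefix y z. \<pi> z) = \<pi> y"
proof -
  have "{z. length z = D \<and> prefix y z} = (@) y ` {t. length t = D - length y}"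
    using assms by (auto simp: prefix_def)
  moreover have "inj_on ((@) y) {t. length t = D - length y}"
    by (simp add: inj_on_def)
  ultimately show ?thesis
    by (simp add: sum.reindex policy_sum_extensions)
qed

lemma policy_sum_prefix_free_le_1:
  assumes "finite L" and prefix_free: "\<forall>y\<in>L. \<forall>z\<in>L. prefix y z \<longrightarrow> y = z"
  shows "(\<Sum>y\<in>L. \<pi> y) \<le> 1"
proof -
  define D where "D = Max (length ` L)"
  define ext where "ext y = {z. length z = D \<and> prefix y z}" for y :: "'a list"
  have finite_len: "finite {z::'a list. length z = D}"
    using finite_lists_length_eq[of "UNIV::'a set" D] by simp
  have "(\<Sum>y\<in>L. \<pi> y) = (\<Sum>y\<in>L. \<Sum>z\<in>ext y. \<pi> z)"
    using \<open>finite L\<close> by (intro sum.cong) (auto simp: ext_def D_def policy_sum_extensions_of_length)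
  also have "\<dots> = (\<Sum>z\<in>(\<Union>y\<in>L. ext y). \<pi> z)"
  proof (rule sum.UNION_disjoint[symmetric])
    show "\<forall>y\<in>L. finite (ext y)"
      unfolding ext_def by (auto intro: finite_subset[OF _ finite_len])
    show "\<forall>y\<in>L. \<forall>y'\<in>L. y \<noteq> y' \<longrightarrow> ext y \<inter> ext y' = {}"
      using prefix_free prefix_same_cases unfolding ext_def by blast
  qed fact
  also have "\<dots> \<le> (\<Sum>z | length z = D. \<pi> z)"
    by (rule sum_mono2[OF finite_len]) (auto simp: ext_def policy_nonneg)
  also have "\<dots> = 1"
    using policy_sum_extensions[of "[]" D] by (simp add: policy_root)
  finally show ?thesis .
qed

lemma card_le_if_node_len_le:
  assumes "finite A" and "0 \<le> c" and len_le: "\<forall>y\<in>A. real (node_len y) \<le> c * \<pi> y"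
  shows "real (card A) \<le> c"
proof -
  define L where "L = {y\<in>A. \<forall>z\<in>A. prefix y z \<longrightarrow> y = z}"
  have "finite L"
    using \<open>finite A\<close> by (simp add: L_def)
  have "A \<subseteq> (\<Union>y\<in>L. set (prefixes y))"
    using prefix_order.finite_has_maximal2[OF \<open>finite A\<close>] by (fastforce simp: L_def)
  then have "card A \<le> card (\<Union>y\<in>L. set (prefixes y))"
    using \<open>finite L\<close> by (intro card_mono) auto
  also have "\<dots> \<le> (\<Sum>y\<in>L. card (set (prefixes y)))"
    using \<open>finite L\<close> by (rule card_UN_le)
  also have "\<dots> \<le> (\<Sum>y\<in>L. node_len y)"
    by (intro sum_mono) (metis card_length length_prefixes node_len_def)
  finally have "real (card A) \<le> (\<Sum>y\<in>L. real (node_len y))"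
    by (simp flip: of_nat_sum)
  also have "\<dots> \<le> (\<Sum>y\<in>L. c * \<pi> y)"
    using len_le by (intro sum_mono) (simp add: L_def)
  also have "\<dots> = c * (\<Sum>y\<in>L. \<pi> y)"
    by (simp add: sum_distrib_left)
  also have "\<dots> \<le> c"
    using policy_sum_prefix_free_le_1[OF \<open>finite L\<close>] \<open>0 \<le> c\<close>
    by (auto simp: L_def intro: mult_left_le)
  finally show ?thesis .
qed

lemma levin_cost_append_le: "levin_cost \<pi> n \<le> levin_cost \<pi> (n @ t)"
proof (cases "\<pi> (n @ t) = 0")
  case False
  then have "0 < \<pi> (n @ t)"
    using policy_nonneg[of "n @ t"] by simp
  moreover have "\<pi> (n @ t) \<le> \<pi> n" and "node_len n \<le> node_len (n @ t)"
    by (simp_all add: policy_append_le node_len_def)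
  ultimately show ?thesis
    by (simp add: levin_cost_pos frac_le)
qed (simp add: levin_cost_def)

lemma node_len_le_if_levin_cost_le:
  assumes "levin_cost \<pi> n \<le> ereal c"
  shows "real (node_len n) \<le> c * \<pi> n"
proof -
  have "0 < \<pi> n"
    using assms policy_nonneg[of n] by (cases "\<pi> n = 0") (auto simp: levin_cost_def)
  then show ?thesis
    using assms by (simp add: levin_cost_pos pos_divide_le_eq)
qed

definition dominates :: "('s \<Rightarrow> 'a \<Rightarrow> 's) \<Rightarrow> 's \<Rightarrow> 'a list \<Rightarrow> 'a list \<Rightarrow> bool" where
  "dominates T s0 y x \<longleftrightarrow> node_state T s0 y = node_state T s0 x
     \<and> \<pi> x \<le> \<pi> y \<and> levin_cost \<pi> y \<le> levin_cost \<pi> x"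

lemma dominates_snoc:
  assumes "markovian T s0 \<pi>" and "dominates T s0 y x"
  shows "dominates T s0 (y @ [a]) (x @ [a])"
proof -
  have same_state: "node_state T s0 y = node_state T s0 x" and "\<pi> x \<le> \<pi> y"
    and cost_le: "levin_cost \<pi> y \<le> levin_cost \<pi> x"
    using assms(2) by (simp_all add: dominates_def)
  have same_state_snoc: "node_state T s0 (y @ [a]) = node_state T s0 (x @ [a])"
    using same_state by (rule node_state_append_cong)
  show ?thesis
  proof (cases "\<pi> (x @ [a]) = 0")
    case True
    then show ?thesis
      using same_state_snoc by (simp add: dominates_def levin_cost_def policy_nonneg)
  next
    case False
    have "0 < \<pi> (x @ [a])"
      using False policy_nonneg[of "x @ [a]"] by simp
    moreover have "\<pi> (x @ [a]) \<le> \<pi> x"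
      by (rule policy_child_le)
    ultimately have "0 < \<pi> x" and "0 < \<pi> y"
      using \<open>\<pi> x \<le> \<pi> y\<close> by linarith+
    define r where "r = cond_pol \<pi> a x"
    have "cond_pol \<pi> a y = r"
      using assms(1) same_state unfolding markovian_def r_def by blast
    then have \<pi>_y: "\<pi> (y @ [a]) = r * \<pi> y"
      using \<open>0 < \<pi> y\<close> by (auto simp: cond_pol_def divide_eq_eq)
    have \<pi>_x: "\<pi> (x @ [a]) = r * \<pi> x"
      using \<open>0 < \<pi> x\<close> by (simp add: r_def cond_pol_def)
    have "0 < r"
      using \<open>0 < \<pi> (x @ [a])\<close> \<open>0 < \<pi> x\<close> \<pi>_x by (simp add: zero_less_mult_iff)
    have "real (node_len y) / \<pi> y \<le> real (node_len x) / \<pi> x"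
      using cost_le \<open>0 < \<pi> x\<close> \<open>0 < \<pi> y\<close> by (simp add: levin_cost_pos)
    moreover have "1 / \<pi> y \<le> 1 / \<pi> x"
      using \<open>0 < \<pi> x\<close> \<open>\<pi> x \<le> \<pi> y\<close> by (simp add: frac_le)
    ultimately have "(real (node_len y) + 1) / \<pi> y \<le> (real (node_len x) + 1) / \<pi> x"
      by (simp add: add_divide_distrib)
    then have "(real (node_len y) + 1) / \<pi> y / r \<le> (real (node_len x) + 1) / \<pi> x / r"
      using \<open>0 < r\<close> by (intro divide_right_mono) simp_all
    moreover have "levin_cost \<pi> (y @ [a]) = ereal ((real (node_len y) + 1) / \<pi> y / r)"
      and "levin_cost \<pi> (x @ [a]) = ereal ((real (node_len x) + 1) / \<pi> x / r)"
      using \<open>0 < r\<close> \<open>0 < \<pi> x\<close> \<open>0 < \<pi> y\<close>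
      by (simp_all add: levin_cost_pos \<pi>_x \<pi>_y node_len_def mult.commute)
    moreover have "\<pi> (x @ [a]) \<le> \<pi> (y @ [a])"
      using \<open>0 < r\<close> \<open>\<pi> x \<le> \<pi> y\<close> by (simp add: \<pi>_x \<pi>_y)
    ultimately show ?thesis
      using same_state_snoc by (simp add: dominates_def)
  qed
qed

lemma dominates_append:
  assumes "markovian T s0 \<pi>" and "dominates T s0 y x"
  shows "dominates T s0 (y @ s) (x @ s)"
proof (induction s rule: rev_induct)
  case Nil
  then show ?case
    using assms(2) by simp
next
  case (snoc a s)
  have "dominates T s0 ((y @ s) @ [a]) ((x @ s) @ [a])"
    using assms(1) snoc by (rule dominates_snoc)
  then show ?case
    by simp
qed

end

locale levin_search = policy \<pi> for \<pi> :: "'a::finite list \<Rightarrow> real" +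
  fixes T :: "'s \<Rightarrow> 'a \<Rightarrow> 's" and s0 :: 's and G :: "'s set"
    and sel :: "nat \<Rightarrow> 'a list set \<Rightarrow> 'a list"
  assumes valid_choice: "valid_choice \<pi> sel"
begin

abbreviation state :: "'a list \<Rightarrow> 's" where
  "state n \<equiv> node_state T s0 n"

abbreviation markov :: bool where
  "markov \<equiv> markovian T s0 \<pi>"

abbreviation run :: "nat \<Rightarrow> 'a list set \<times> 'a list set \<times> bool" where
  "run k \<equiv> levin_run T s0 G \<pi> sel k"

text \<open>\<open>S\<close> collects the nodes selected so far and \<open>E \<subseteq> S\<close> those that were expanded;
  the nodes of \<open>S - E\<close> were discarded by a state cut.\<close>
definition search_inv :: "'a list set \<Rightarrow> 'a list set \<Rightarrow> 'a list set \<Rightarrow> 'a list set \<Rightarrow> bool" where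
  "search_inv F V S E \<longleftrightarrow>
     finite F \<and> finite S \<and> E \<subseteq> S \<and> F \<inter> S = {} \<and> [] \<in> F \<union> S
     \<and> (\<forall>x a. x @ [a] \<in> F \<union> S \<longleftrightarrow> x \<in> E)
     \<and> (\<forall>x\<in>S - E. markov \<and> (\<exists>n\<in>E. dominates T s0 n x))
     \<and> (\<forall>y\<in>S. state y \<notin> G)
     \<and> (\<forall>y\<in>S. \<forall>m\<in>F. levin_cost \<pi> y \<le> levin_cost \<pi> m)
     \<and> V = (if markov then E else {})"

lemma search_inv_init: "search_inv {[]} {} {} {}"
  by (simp add: search_inv_def)

lemma search_inv_goal_cost:
  assumes inv: "search_inv F V S E" and "state g \<in> G"
  shows "\<exists>m\<in>F. levin_cost \<pi> m \<le> levin_cost \<pi> g"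
proof -
  have children: "\<forall>x a. x @ [a] \<in> F \<union> S \<longleftrightarrow> x \<in> E"
    and cut: "\<forall>x\<in>S - E. markov \<and> (\<exists>n\<in>E. dominates T s0 n x)"
    and no_goal: "\<forall>y\<in>S. state y \<notin> G"
    using inv by (simp_all add: search_inv_def)
  have "\<exists>m\<in>F. levin_cost \<pi> m \<le> levin_cost \<pi> (x @ s)"
    if "x \<in> F \<union> S" and "state (x @ s) \<in> G" for x s
    using that
  proof (induction s arbitrary: x)
    case Nil
    then show ?case
      using no_goal by auto
  next
    case (Cons a s)
    consider "x \<in> F" | "x \<in> E" | "x \<in> S - E"
      using Cons.prems(1) by blast
    then show ?case
    proof cases
      case 1
      then show ?thesis
        using levin_cost_append_le by blast
    next
      case 2
      then show ?thesis
        using Cons.IH[of "x @ [a]"] Cons.prems(2) children by simp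
    next
      case 3
      then obtain n where "markov" and "n \<in> E" and "dominates T s0 n x"
        using cut by blast
      then have "dominates T s0 (n @ a # s) (x @ a # s)"
        by (intro dominates_append)
      then have "state ((n @ [a]) @ s) \<in> G"
        and "levin_cost \<pi> ((n @ [a]) @ s) \<le> levin_cost \<pi> (x @ a # s)"
        using Cons.prems(2) by (simp_all add: dominates_def)
      moreover have "n @ [a] \<in> F \<union> S"
        using \<open>n \<in> E\<close> children by blast
      ultimately show ?thesis
        using Cons.IH by (meson order_trans)
    qed
  qed
  moreover have "[] \<in> F \<union> S"
    using inv by (simp add: search_inv_def)
  ultimately show ?thesis
    using \<open>state g \<in> G\<close> by fastforce
qed

lemma search_inv_card_bound:
  assumes inv: "search_inv F V S E" and "state g \<in> G" and "0 < \<pi> g"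
  shows "real (Suc (card S)) \<le> real (node_len g) / \<pi> g"
proof -
  obtain m where "m \<in> F" and m_cost: "levin_cost \<pi> m \<le> levin_cost \<pi> g"
    using search_inv_goal_cost[OF assms(1,2)] by blast
  have "finite S" and "m \<notin> S" and S_cost: "\<forall>y\<in>S. levin_cost \<pi> y \<le> levin_cost \<pi> m"
    using inv \<open>m \<in> F\<close> by (auto simp: search_inv_def)
  define c where "c = real (node_len g) / \<pi> g"
  have "levin_cost \<pi> g = ereal c"
    using \<open>0 < \<pi> g\<close> by (simp add: c_def levin_cost_pos)
  then have "\<forall>y\<in>insert m S. real (node_len y) \<le> c * \<pi> y"
    using m_cost S_cost by (auto intro: node_len_le_if_levin_cost_le order_trans)
  moreover have "0 \<le> c"
    using \<open>0 < \<pi> g\<close> by (simp add: c_def)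
  ultimately have "real (card (insert m S)) \<le> c"
    using \<open>finite S\<close> by (intro card_le_if_node_len_le) auto
  then show ?thesis
    using \<open>finite S\<close> \<open>m \<notin> S\<close> by (simp add: c_def)
qed

lemma search_inv_cut:
  assumes inv: "search_inv F V S E" and "x \<in> F"
    and x_min: "\<forall>m\<in>F. levin_cost \<pi> x \<le> levin_cost \<pi> m" and "state x \<notin> G"
    and "markov" and "n \<in> V" and "state n = state x" and "\<pi> x \<le> \<pi> n"
  shows "search_inv (F - {x}) V (insert x S) E"
proof -
  have "n \<in> E" and "n \<in> S"
    using inv \<open>markov\<close> \<open>n \<in> V\<close> by (auto simp: search_inv_def)
  then have "levin_cost \<pi> n \<le> levin_cost \<pi> x"
    using inv \<open>x \<in> F\<close> by (simp add: search_inv_def)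
  then have "dominates T s0 n x"
    using \<open>state n = state x\<close> \<open>\<pi> x \<le> \<pi> n\<close> by (simp add: dominates_def)
  moreover have "(F - {x}) \<union> insert x S = F \<union> S"
    using \<open>x \<in> F\<close> by blast
  ultimately show ?thesis
    using inv \<open>x \<in> F\<close> x_min \<open>state x \<notin> G\<close> \<open>markov\<close> \<open>n \<in> E\<close>
    unfolding search_inv_def by auto
qed

lemma search_inv_expand:
  assumes inv: "search_inv F V S E" and "x \<in> F"
    and x_min: "\<forall>m\<in>F. levin_cost \<pi> x \<le> levin_cost \<pi> m" and "state x \<notin> G"
  shows "search_inv ((F - {x}) \<union> {x @ [a] |a. True}) (if markov then V \<union> {x} else V)
           (insert x S) (insert x E)"
proof -
  have "x \<notin> S" and "E \<subseteq> S"
    using inv \<open>x \<in> F\<close> by (auto simp: search_inv_def)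
  have children: "\<forall>y a. y @ [a] \<in> F \<union> S \<longleftrightarrow> y \<in> E"
    using inv by (simp add: search_inv_def)
  then have "x @ [a] \<notin> S" for a
    using \<open>x \<notin> S\<close> \<open>E \<subseteq> S\<close> by blast
  moreover have "finite {x @ [a] |a. True}"
    using finite_image_set[of "\<lambda>_. True" "\<lambda>a. x @ [a]"] by simp
  moreover have "levin_cost \<pi> y \<le> levin_cost \<pi> (x @ [a])" if "y \<in> insert x S" for y a
  proof -
    have "levin_cost \<pi> y \<le> levin_cost \<pi> x"
      using that inv \<open>x \<in> F\<close> by (auto simp: search_inv_def)
    then show ?thesis
      using levin_cost_append_le order_trans by blast
  qed
  moreover have "(F - {x}) \<union> {x @ [a] |a. True} \<union> insert x S = F \<union> S \<union> {x @ [a] |a. True}"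
    using \<open>x \<in> F\<close> by blast
  ultimately show ?thesis
    using inv \<open>x \<in> F\<close> x_min \<open>state x \<notin> G\<close> \<open>x \<notin> S\<close> children
    unfolding search_inv_def by auto
qed

lemma search_inv_step:
  assumes inv: "search_inv F V S E" and "state g \<in> G"
    and step: "levin_step T s0 G \<pi> sel k (F, V, False) = (F', V', False)"
  shows "\<exists>S' E'. card S' = Suc (card S) \<and> search_inv F' V' S' E'"
proof -
  define x where "x = sel k F"
  have "F \<noteq> {}"
    using search_inv_goal_cost[OF inv \<open>state g \<in> G\<close>] by blast
  moreover have "finite F" and "finite S" and "F \<inter> S = {}"
    using inv by (simp_all add: search_inv_def)
  ultimately have "x \<in> F" and x_min: "\<forall>m\<in>F. levin_cost \<pi> x \<le> levin_cost \<pi> m"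
    using valid_choice unfolding valid_choice_def x_def by blast+
  have "state x \<notin> G"
    using step \<open>F \<noteq> {}\<close> by (auto simp: levin_step_def Let_def x_def)
  have "x \<notin> S"
    using \<open>x \<in> F\<close> \<open>F \<inter> S = {}\<close> by blast
  then have card_insert: "card (insert x S) = Suc (card S)"
    using \<open>finite S\<close> by simp
  have step_eq: "levin_step T s0 G \<pi> sel k (F, V, False) =
      (if markov \<and> (\<exists>n\<in>V. state n = state x \<and> \<pi> x \<le> \<pi> n) then (F - {x}, V, False)
       else ((F - {x}) \<union> {x @ [a] |a. True}, if markov then V \<union> {x} else V, False))"
    using \<open>F \<noteq> {}\<close> \<open>state x \<notin> G\<close> by (simp add: levin_step_def Let_def x_def[symmetric])
  show ?thesis
  proof (cases "markov \<and> (\<exists>n\<in>V. state n = state x \<and> \<pi> x \<le> \<pi> n)")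
    case True
    then have "F' = F - {x}" and "V' = V"
      using step unfolding step_eq if_P[OF True] by simp_all
    then show ?thesis
      using True search_inv_cut[OF inv \<open>x \<in> F\<close> x_min \<open>state x \<notin> G\<close>] card_insert by blast
  next
    case False
    then have "F' = (F - {x}) \<union> {x @ [a] |a. True}" and "V' = (if markov then V \<union> {x} else V)"
      using step unfolding step_eq if_not_P[OF False] by simp_all
    then show ?thesis
      using search_inv_expand[OF inv \<open>x \<in> F\<close> x_min \<open>state x \<notin> G\<close>] card_insert by blast
  qed
qed

lemma run_search_inv:
  assumes "state g \<in> G" and "run k = (F, V, False)"
  shows "\<exists>S E. card S = k \<and> search_inv F V S E"
  using assms(2)
proof (induction k arbitrary: F V)
  case 0
  then show ?case
    using search_inv_init by force
next
  case (Suc k)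
  obtain F0 V0 stop where run_k: "run k = (F0, V0, stop)"
    by (cases "run k")
  have "\<not> stop"
    using Suc.prems run_k by (auto simp: levin_step_def)
  then obtain S E where "card S = k" and "search_inv F0 V0 S E"
    using Suc.IH[of F0 V0] run_k by auto
  moreover have "levin_step T s0 G \<pi> sel k (F0, V0, False) = (F, V, False)"
    using Suc.prems run_k \<open>\<not> stop\<close> by simp
  ultimately show ?case
    using search_inv_step assms(1) by blast
qed

lemma levin_N_le_levin_cost:
  assumes "state g \<in> G"
  shows "levin_N T s0 G \<pi> sel \<le> levin_cost \<pi> g"
proof (cases "\<pi> g = 0")
  case True
  then show ?thesis
    by (simp add: levin_cost_def)
next
  case False
  then have "0 < \<pi> g"
    using policy_nonneg[of g] by simp
  define c where "c = real (node_len g) / \<pi> g"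
  define stopped where "stopped k \<longleftrightarrow> snd (snd (run k))" for k
  have bound: "real (Suc k) \<le> c" if "\<not> stopped k" for k
  proof -
    obtain F V stop where "run k = (F, V, stop)"
      by (cases "run k")
    with that have "run k = (F, V, False)"
      by (simp add: stopped_def)
    then obtain S E where "card S = k" and "search_inv F V S E"
      using run_search_inv[OF assms] by blast
    then show ?thesis
      using search_inv_card_bound[OF _ assms \<open>0 < \<pi> g\<close>] by (auto simp: c_def)
  qed
  have "stopped (nat \<lceil>c\<rceil>)"
    using bound[of "nat \<lceil>c\<rceil>"] real_nat_ceiling_ge[of c] by linarith
  define K where "K = (LEAST k. stopped k)"
  have "stopped K"
    unfolding K_def using \<open>stopped (nat \<lceil>c\<rceil>)\<close> by (rule LeastI)
  moreover have "\<not> stopped 0"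
    by (simp add: stopped_def)
  ultimately obtain j where "K = Suc j"
    by (cases K) auto
  then have "\<not> stopped j"
    using not_less_Least[of j stopped] by (simp add: K_def)
  then have "real K \<le> c"
    using bound \<open>K = Suc j\<close> by simp
  moreover have "levin_N T s0 G \<pi> sel = ereal (real K)"
    using \<open>stopped K\<close> by (auto simp: levin_N_def K_def stopped_def)
  ultimately show ?thesis
    using \<open>0 < \<pi> g\<close> by (simp add: c_def levin_cost_pos)
qed

end

theorem theorem3:
  fixes T :: "'s \<Rightarrow> 'a::finite \<Rightarrow> 's" and s0 :: 's and G :: "'s set"
    and \<pi> :: "'a list \<Rightarrow> real" and sel :: "nat \<Rightarrow> 'a list set \<Rightarrow> 'a list"
  assumes "is_policy \<pi>"
    and "valid_choice \<pi> sel"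
  shows "levin_N T s0 G \<pi> sel
           \<le> (INF n\<in>{n. node_state T s0 n \<in> G}. levin_cost \<pi> n)"
proof -
  interpret levin_search \<pi> T s0 G sel
    using assms by unfold_locales
  show ?thesis
    by (rule INF_greatest) (simp add: levin_N_le_levin_cost)
qed

end
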